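(* Let $\Sigma_A,\Sigma_B,\Sigma$ be finite nonempty sets and $(X_A,X_B,Y)$ random variables with values in $\Sigma_A\times\Sigma_B\times\Sigma$, all marginal probabilities positive, with $X_A,X_B$ independent conditional on $Y$. Let $PS:\Sigma_B\times\Delta_{\Sigma_B}\to\mathbb{R}$ be a proper scoring rule. For $h_A:\Sigma_A\to\Delta_\Sigma$ and $v_B:\Sigma_B\to[0,1]^\Sigma$ with $\sum_{x_B\in\Sigma_B}v_B(x_B)=(1,\dots,1)$, define the expected $PS$-gain $$G_{PS}(h_A,v_B):=\sum_{x_A,x_B}\Pr[X_A=x_A,X_B=x_B]\,PS\Big(x_B,\big(v_B(x_B')\cdot h_A(x_A)\big)_{x_B'\in\Sigma_B}\Big).$$ Then $v_B^*(x_B)=(\Pr[X_B=x_B\mid Y=y])_{y\in\Sigma}$, $h_A^*(x_A)=(\Pr[Y=y\mid X_A=x_A])_{y\in\Sigma}$ is a maximizer of $G_{PS}$ over all such pairs $(h_A,v_B)$.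
   Context: $\Delta_S$ denotes the set of probability vectors on a finite set $S$; $\cdot$ is the dot product in $\mathbb{R}^\Sigma$. A scoring rule $PS:\Sigma_B\times\Delta_{\Sigma_B}\to\mathbb{R}$ is proper if for all $\mathbf{p},\mathbf{q}\in\Delta_{\Sigma_B}$, $\sum_{\sigma}\mathbf{p}(\sigma)PS(\sigma,\mathbf{q})\le\sum_\sigma\mathbf{p}(\sigma)PS(\sigma,\mathbf{p})$. The constraint on $v_B$ ensures $(v_B(x_B')\cdot h_A(x_A))_{x_B'}\in\Delta_{\Sigma_B}$. *)

theory Defs
  imports "HOL-Probability.Probability"
begin

text \<open>Random variables (X_A, X_B, Y) with values in the finite nonempty types
  'a, 'b, 'c, given by their joint distribution M.\<close>

definition prob_simplex :: "('s::finite \<Rightarrow> real) set" where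
  "prob_simplex = {q. (\<forall>s. 0 \<le> q s) \<and> (\<Sum>s\<in>UNIV. q s) = 1}"

definition proper_scoring_rule :: "('b::finite \<Rightarrow> ('b \<Rightarrow> real) \<Rightarrow> real) \<Rightarrow> bool" where
  "proper_scoring_rule PS \<longleftrightarrow>
     (\<forall>p\<in>prob_simplex. \<forall>q\<in>prob_simplex.
        (\<Sum>\<sigma>\<in>UNIV. p \<sigma> * PS \<sigma> q) \<le> (\<Sum>\<sigma>\<in>UNIV. p \<sigma> * PS \<sigma> p))"

definition PrA :: "('a \<times> 'b \<times> 'c) pmf \<Rightarrow> 'a \<Rightarrow> real" where
  "PrA M a = measure_pmf.prob M {w. fst w = a}"
definition PrB :: "('a \<times> 'b \<times> 'c) pmf \<Rightarrow> 'b \<Rightarrow> real" where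
  "PrB M b = measure_pmf.prob M {w. fst (snd w) = b}"
definition PrY :: "('a \<times> 'b \<times> 'c) pmf \<Rightarrow> 'c \<Rightarrow> real" where
  "PrY M y = measure_pmf.prob M {w. snd (snd w) = y}"
definition PrAB :: "('a \<times> 'b \<times> 'c) pmf \<Rightarrow> 'a \<Rightarrow> 'b \<Rightarrow> real" where
  "PrAB M a b = measure_pmf.prob M {w. fst w = a \<and> fst (snd w) = b}"
definition PrAY :: "('a \<times> 'b \<times> 'c) pmf \<Rightarrow> 'a \<Rightarrow> 'c \<Rightarrow> real" where
  "PrAY M a y = measure_pmf.prob M {w. fst w = a \<and> snd (snd w) = y}"
definition PrBY :: "('a \<times> 'b \<times> 'c) pmf \<Rightarrow> 'b \<Rightarrow> 'c \<Rightarrow> real" where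
  "PrBY M b y = measure_pmf.prob M {w. fst (snd w) = b \<and> snd (snd w) = y}"
definition PrABY :: "('a \<times> 'b \<times> 'c) pmf \<Rightarrow> 'a \<Rightarrow> 'b \<Rightarrow> 'c \<Rightarrow> real" where
  "PrABY M a b y = measure_pmf.prob M {w. w = (a, b, y)}"

definition cond_indep :: "('a \<times> 'b \<times> 'c) pmf \<Rightarrow> bool" where
  "cond_indep M \<longleftrightarrow> (\<forall>a b y.
     PrABY M a b y / PrY M y = (PrAY M a y / PrY M y) * (PrBY M b y / PrY M y))"

definition admissible_hA :: "('a \<Rightarrow> 'c::finite \<Rightarrow> real) \<Rightarrow> bool" where
  "admissible_hA hA \<longleftrightarrow> (\<forall>a. hA a \<in> prob_simplex)"
definition admissible_vB :: "('b::finite \<Rightarrow> 'c::finite \<Rightarrow> real) \<Rightarrow> bool" where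
  "admissible_vB vB \<longleftrightarrow> (\<forall>b y. 0 \<le> vB b y \<and> vB b y \<le> 1) \<and>
     (\<forall>y. (\<Sum>b\<in>UNIV. vB b y) = 1)"

definition G_PS :: "('b::finite \<Rightarrow> ('b \<Rightarrow> real) \<Rightarrow> real) \<Rightarrow> ('a::finite \<times> 'b \<times> 'c::finite) pmf
    \<Rightarrow> ('a \<Rightarrow> 'c \<Rightarrow> real) \<Rightarrow> ('b \<Rightarrow> 'c \<Rightarrow> real) \<Rightarrow> real" where
  "G_PS PS M hA vB = (\<Sum>a\<in>UNIV. \<Sum>b\<in>UNIV.
      PrAB M a b * PS b (\<lambda>b'. \<Sum>y\<in>UNIV. vB b' y * hA a y))"

definition vB_star :: "('a \<times> 'b \<times> 'c) pmf \<Rightarrow> 'b \<Rightarrow> 'c \<Rightarrow> real" where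
  "vB_star M b y = PrBY M b y / PrY M y"
definition hA_star :: "('a \<times> 'b \<times> 'c) pmf \<Rightarrow> 'a \<Rightarrow> 'c \<Rightarrow> real" where
  "hA_star M a y = PrAY M a y / PrA M a"

end

theory Submission
  imports Defs
begin

text \<open>Under conditional independence, mixing the conditional distributions of X_B given Y
  with the posterior of Y given X_A yields exactly the conditional distribution of X_B given
  X_A. Hence for every x_A the optimal pair reports the true conditional distribution of X_B,
  while any admissible pair reports some other probability vector; properness of PS compares
  the two pointwise in x_A, and summing with the weights Pr[X_A = x_A] gives the claim.\<close>

lemma measure_pmf_prob_eq_sum_triple:
  fixes M :: "('a::finite \<times> 'b::finite \<times> 'c::finite) pmf"
  shows "measure_pmf.prob M S =
    (\<Sum>a\<in>UNIV. \<Sum>b\<in>UNIV. \<Sum>y\<in>UNIV. if (a, b, y) \<in> S then pmf M (a, b, y) else 0)"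
proof -
  have "measure_pmf.prob M S = (\<Sum>w\<in>UNIV. if w \<in> S then pmf M w else 0)"
    by (simp add: measure_measure_pmf_finite sum.If_cases)
  also have "\<dots> = (\<Sum>a\<in>UNIV. \<Sum>b\<in>UNIV. \<Sum>y\<in>UNIV. if (a, b, y) \<in> S then pmf M (a, b, y) else 0)"
    by (simp add: UNIV_Times_UNIV[symmetric] sum.cartesian_product del: UNIV_Times_UNIV)
  finally show ?thesis .
qed

lemma if_conj_eq_nested_if:
  "(if P \<and> Q then x else (0::'a::zero)) = (if P then if Q then x else 0 else 0)"
  by simp

lemma sum_if_const_cond:
  "(\<Sum>x\<in>S. if P then f x else (0::'b::comm_monoid_add)) = (if P then sum f S else 0)"
  by simp

lemma Pr_eq_sum_pmf:
  fixes M :: "('a::finite \<times> 'b::finite \<times> 'c::finite) pmf"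
  shows "PrABY M a b y = pmf M (a, b, y)"
    and "PrAY M a y = (\<Sum>b\<in>UNIV. pmf M (a, b, y))"
    and "PrBY M b y = (\<Sum>a\<in>UNIV. pmf M (a, b, y))"
    and "PrAB M a b = (\<Sum>y\<in>UNIV. pmf M (a, b, y))"
    and "PrA M a = (\<Sum>b\<in>UNIV. \<Sum>y\<in>UNIV. pmf M (a, b, y))"
    and "PrY M y = (\<Sum>a\<in>UNIV. \<Sum>b\<in>UNIV. pmf M (a, b, y))"
  unfolding PrABY_def PrAY_def PrBY_def PrAB_def PrA_def PrY_def
    measure_pmf_prob_eq_sum_triple
  by (simp_all add: if_conj_eq_nested_if sum_if_const_cond sum.delta sum.delta')

lemma sum_PrAY:
  fixes M :: "('a::finite \<times> 'b::finite \<times> 'c::finite) pmf"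
  shows "(\<Sum>y\<in>UNIV. PrAY M a y) = PrA M a"
  unfolding Pr_eq_sum_pmf by (rule sum.swap)

lemma sum_PrBY:
  fixes M :: "('a::finite \<times> 'b::finite \<times> 'c::finite) pmf"
  shows "(\<Sum>b\<in>UNIV. PrBY M b y) = PrY M y"
  unfolding Pr_eq_sum_pmf by (rule sum.swap)

lemma sum_PrAB:
  fixes M :: "('a::finite \<times> 'b::finite \<times> 'c::finite) pmf"
  shows "(\<Sum>b\<in>UNIV. PrAB M a b) = PrA M a"
  unfolding Pr_eq_sum_pmf ..

lemma PrBY_le_PrY:
  fixes M :: "('a::finite \<times> 'b::finite \<times> 'c::finite) pmf"
  shows "PrBY M b y \<le> PrY M y"
  unfolding Pr_eq_sum_pmf by (intro sum_mono member_le_sum) auto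

lemma PrABY_cond_indep:
  fixes M :: "('a::finite \<times> 'b::finite \<times> 'c::finite) pmf"
  assumes "cond_indep M" and "PrY M y > 0"
  shows "PrABY M a b y = PrAY M a y * PrBY M b y / PrY M y"
proof -
  have "PrABY M a b y / PrY M y = (PrAY M a y / PrY M y) * (PrBY M b y / PrY M y)"
    using assms(1) unfolding cond_indep_def by blast
  with assms(2) show ?thesis
    by (simp add: field_simps)
qed

definition PrB_given_A :: "('a \<times> 'b \<times> 'c) pmf \<Rightarrow> 'a \<Rightarrow> 'b \<Rightarrow> real" where
  "PrB_given_A M a b = PrAB M a b / PrA M a"

lemma normalized_in_prob_simplex:
  fixes q :: "'s::finite \<Rightarrow> real"
  assumes "\<forall>s. 0 \<le> q s" and "(\<Sum>s\<in>UNIV. q s) > 0"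
  shows "(\<lambda>s. q s / (\<Sum>s\<in>UNIV. q s)) \<in> prob_simplex"
  using assms by (simp add: prob_simplex_def sum_divide_distrib[symmetric])

lemma PrB_given_A_in_prob_simplex:
  fixes M :: "('a::finite \<times> 'b::finite \<times> 'c::finite) pmf"
  assumes "PrA M a > 0"
  shows "PrB_given_A M a \<in> prob_simplex"
proof -
  have "PrB_given_A M a = (\<lambda>b. PrAB M a b / (\<Sum>b\<in>UNIV. PrAB M a b))"
    by (simp add: fun_eq_iff PrB_given_A_def sum_PrAB)
  moreover have "\<forall>b. 0 \<le> PrAB M a b"
    by (simp add: PrAB_def)
  ultimately show ?thesis
    using normalized_in_prob_simplex[of "PrAB M a"] assms by (simp add: sum_PrAB)
qed

lemma admissible_hA_star:
  fixes M :: "('a::finite \<times> 'b::finite \<times> 'c::finite) pmf"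
  assumes "\<forall>a. PrA M a > 0"
  shows "admissible_hA (hA_star M)"
  unfolding admissible_hA_def
proof
  fix a
  have "hA_star M a = (\<lambda>y. PrAY M a y / (\<Sum>y\<in>UNIV. PrAY M a y))"
    by (simp add: fun_eq_iff hA_star_def sum_PrAY)
  moreover have "\<forall>y. 0 \<le> PrAY M a y"
    by (simp add: PrAY_def)
  ultimately show "hA_star M a \<in> prob_simplex"
    using normalized_in_prob_simplex[of "PrAY M a"] assms by (simp add: sum_PrAY)
qed

lemma admissible_vB_star:
  fixes M :: "('a::finite \<times> 'b::finite \<times> 'c::finite) pmf"
  assumes "\<forall>y. PrY M y > 0"
  shows "admissible_vB (vB_star M)"
  unfolding admissible_vB_def
proof (intro conjI allI)
  fix b y
  show "0 \<le> vB_star M b y" and "vB_star M b y \<le> 1"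
    using assms PrBY_le_PrY[of M b y] by (simp_all add: vB_star_def PrBY_def less_imp_le)
next
  fix y
  show "(\<Sum>b\<in>UNIV. vB_star M b y) = 1"
    using assms[rule_format, of y]
    by (simp add: vB_star_def sum_divide_distrib[symmetric] sum_PrBY)
qed

lemma report_star_eq_PrB_given_A:
  fixes M :: "('a::finite \<times> 'b::finite \<times> 'c::finite) pmf"
  assumes "cond_indep M" and "\<forall>y. PrY M y > 0"
  shows "(\<lambda>b. \<Sum>y\<in>UNIV. vB_star M b y * hA_star M a y) = PrB_given_A M a"
proof
  fix b
  have "(\<Sum>y\<in>UNIV. vB_star M b y * hA_star M a y) = (\<Sum>y\<in>UNIV. PrABY M a b y / PrA M a)"
    using assms by (intro sum.cong) (auto simp: vB_star_def hA_star_def PrABY_cond_indep)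
  also have "\<dots> = PrB_given_A M a b"
    by (simp add: PrB_given_A_def sum_divide_distrib[symmetric] Pr_eq_sum_pmf)
  finally show "(\<Sum>y\<in>UNIV. vB_star M b y * hA_star M a y) = PrB_given_A M a b" .
qed

lemma report_in_prob_simplex:
  fixes vB :: "'b::finite \<Rightarrow> 'c::finite \<Rightarrow> real"
  assumes "admissible_vB vB" and "h \<in> prob_simplex"
  shows "(\<lambda>b. \<Sum>y\<in>UNIV. vB b y * h y) \<in> prob_simplex"
proof -
  have "(\<Sum>b\<in>UNIV. \<Sum>y\<in>UNIV. vB b y * h y) = (\<Sum>y\<in>UNIV. (\<Sum>b\<in>UNIV. vB b y) * h y)"
    by (subst sum.swap) (simp add: sum_distrib_right)
  also have "\<dots> = 1"
    using assms by (simp add: admissible_vB_def prob_simplex_def)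
  finally show ?thesis
    using assms by (auto simp: admissible_vB_def prob_simplex_def intro!: sum_nonneg)
qed

lemma G_PS_eq_expected_score:
  fixes M :: "('a::finite \<times> 'b::finite \<times> 'c::finite) pmf"
  assumes "\<forall>a. PrA M a > 0"
  shows "G_PS PS M hA vB = (\<Sum>a\<in>UNIV. PrA M a *
    (\<Sum>b\<in>UNIV. PrB_given_A M a b * PS b (\<lambda>b'. \<Sum>y\<in>UNIV. vB b' y * hA a y)))"
  unfolding G_PS_def PrB_given_A_def
proof (intro sum.cong refl)
  fix a
  have "PrA M a \<noteq> 0"
    using assms by (metis less_irrefl)
  then show "(\<Sum>b\<in>UNIV. PrAB M a b * PS b (\<lambda>b'. \<Sum>y\<in>UNIV. vB b' y * hA a y)) =
    PrA M a * (\<Sum>b\<in>UNIV. PrAB M a b / PrA M a * PS b (\<lambda>b'. \<Sum>y\<in>UNIV. vB b' y * hA a y))"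
    by (simp add: sum_distrib_left)
qed

lemma weighted_proper_score_le:
  fixes PS :: "'b::finite \<Rightarrow> ('b \<Rightarrow> real) \<Rightarrow> real"
  assumes "proper_scoring_rule PS"
    and "\<forall>a. 0 \<le> w a" and "\<forall>a. p a \<in> prob_simplex" and "\<forall>a. q a \<in> prob_simplex"
  shows "(\<Sum>a\<in>A. w a * (\<Sum>b\<in>UNIV. p a b * PS b (q a))) \<le>
    (\<Sum>a\<in>A. w a * (\<Sum>b\<in>UNIV. p a b * PS b (p a)))"
proof (rule sum_mono)
  fix a
  show "w a * (\<Sum>b\<in>UNIV. p a b * PS b (q a)) \<le> w a * (\<Sum>b\<in>UNIV. p a b * PS b (p a))"
    using assms unfolding proper_scoring_rule_def by (simp add: mult_left_mono)
qed

theorem mainTheorem8: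
  fixes M :: "('a::finite \<times> 'b::finite \<times> 'c::finite) pmf"
    and PS :: "'b \<Rightarrow> ('b \<Rightarrow> real) \<Rightarrow> real"
  assumes "\<forall>a. PrA M a > 0" and "\<forall>b. PrB M b > 0" and "\<forall>y. PrY M y > 0"
    and "cond_indep M"
    and "proper_scoring_rule PS"
  shows "admissible_hA (hA_star M) \<and> admissible_vB (vB_star M) \<and>
    (\<forall>hA vB. admissible_hA hA \<and> admissible_vB vB \<longrightarrow>
       G_PS PS M hA vB \<le> G_PS PS M (hA_star M) (vB_star M))"
proof (intro conjI allI impI)
  show "admissible_hA (hA_star M)"
    using assms(1) by (rule admissible_hA_star)
  show "admissible_vB (vB_star M)"
    using assms(3) by (rule admissible_vB_star)
  fix hA :: "'a \<Rightarrow> 'c \<Rightarrow> real" and vB :: "'b \<Rightarrow> 'c \<Rightarrow> real"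
  assume "admissible_hA hA \<and> admissible_vB vB"
  then have "\<forall>a. (\<lambda>b. \<Sum>y\<in>UNIV. vB b y * hA a y) \<in> prob_simplex"
    by (simp add: admissible_hA_def report_in_prob_simplex)
  moreover have "\<forall>a. 0 \<le> PrA M a" and "\<forall>a. PrB_given_A M a \<in> prob_simplex"
    using assms(1) by (auto simp: PrB_given_A_in_prob_simplex less_imp_le)
  ultimately show "G_PS PS M hA vB \<le> G_PS PS M (hA_star M) (vB_star M)"
    unfolding G_PS_eq_expected_score[OF assms(1)] report_star_eq_PrB_given_A[OF assms(4,3)]
    by (intro weighted_proper_score_le[OF assms(5)])
qed

end
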